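(* Let $\Gamma$ be an infinite set. Then the pair $(\ell^\infty(\Gamma),c_0(\Gamma))$ has the compact quotient lifting property (CQLP) but does not have the quotient lifting property (QLP).
   Context: For a Banach space $X$ and a closed subspace $J\subset X$, let $\pi:X\to X/J$ be the quotient map. The pair $(X,J)$ has the quotient lifting property (QLP) if for every Banach space $Y$ and every bounded linear operator $S:Y\to X/J$ there is a bounded linear operator $T:Y\to X$ with $\pi\circ T=S$ and $\|T\|=\|S\|$. The pair $(X,J)$ has the compact quotient lifting property (CQLP) if for every Banach space $Z$ and every compact linear operator $T:Z\to X/J$ there is a compact linear operator $S:Z\to X$ with $\pi\circ S=T$ and $\|S\|=\|T\|$. *)

theory Defs
  imports "HOL-Analysis.Analysis" "HOL-Probability.Discrete_Topology"
begin

text \<open>ell-infinity(Gamma) is modelled as the bounded (automatically continuous)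
 real functions on the discrete copy of the index type 'g, with the sup norm.\<close>

type_synonym 'g linf = "'g discrete \<Rightarrow>\<^sub>C real"

definition c0 :: "'g linf set" where
  "c0 = {f. \<forall>e>0. finite {x. e \<le> \<bar>apply_bcontfun f x\<bar>}}"

definition compact_operator :: "('a::real_normed_vector \<Rightarrow> 'b::real_normed_vector) \<Rightarrow> bool" where
  "compact_operator T \<longleftrightarrow> bounded_linear T \<and> compact (closure (T ` ball 0 1))"

text \<open>Lifting properties relative to a quotient map pi : X -> X/J, with the
 Banach space Y (resp. Z) ranging over the type given as first argument.\<close>

definition QLP :: "'y::banach itself \<Rightarrow> ('x::real_normed_vector \<Rightarrow> 'q::real_normed_vector) \<Rightarrow> bool" where
  "QLP _ \<pi> \<longleftrightarrow> (\<forall>S::'y \<Rightarrow> 'q. bounded_linear S \<longrightarrow>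
      (\<exists>T::'y \<Rightarrow> 'x. bounded_linear T \<and> \<pi> \<circ> T = S \<and> onorm T = onorm S))"

definition CQLP :: "'z::banach itself \<Rightarrow> ('x::real_normed_vector \<Rightarrow> 'q::real_normed_vector) \<Rightarrow> bool" where
  "CQLP _ \<pi> \<longleftrightarrow> (\<forall>T::'z \<Rightarrow> 'q. compact_operator T \<longrightarrow>
      (\<exists>S::'z \<Rightarrow> 'x. compact_operator S \<and> \<pi> \<circ> S = T \<and> onorm S = onorm T))"

end

theory Submission
  imports Defs
begin

text \<open>
  For a free ultrafilter \<open>U\<close> on \<open>\<Gamma>\<close> the \<open>U\<close>-limit is a norm-one functional on
  \<open>\<ell>\<^sup>\<infinity>(\<Gamma>)\<close> vanishing on \<open>c\<^sub>0(\<Gamma>)\<close>, hence a norm-one functional on the quotient.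
  Given a compact \<open>T\<close>, choose lifts of the points of finite \<open>1/(n+1)\<close>-nets of \<open>T(B\<^sub>Z)\<close>
  and, for every \<open>\<gamma>\<close>, a free ultrafilter \<open>U\<^sub>\<gamma>\<close> concentrated near \<open>\<gamma>\<close> with respect to these
  countably many functions; only finitely many \<open>\<gamma>\<close> fail this at a given level \<open>n\<close>.
  Then \<open>(S z)(\<gamma>) = lim\<^bsub>U\<^sub>\<gamma>\<^esub>\<close> of a lift of \<open>T z\<close> is linear with \<open>\<parallel>S z\<parallel> \<le> \<parallel>T z\<parallel>\<close>,
  differs from a lift of \<open>T z\<close> by an element of \<open>c\<^sub>0\<close>, and is compact because \<open>T\<close> dominates it.

  For the failure of the lifting property, a bounded right inverse \<open>R\<close> of the quotient map is
  tested on the indicators of an uncountable almost disjoint family of infinite subsets of a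
  countable set \<open>D \<subseteq> \<Gamma>\<close>: as \<open>\<parallel>\<pi>(\<Sum> \<pm>1\<^sub>B)\<parallel> \<le> 1\<close>, at each point only finitely many of the
  functions \<open>R(\<pi> 1\<^sub>B)\<close> exceed any \<open>\<epsilon> > 0\<close>, so some \<open>B\<close> has \<open>R(\<pi> 1\<^sub>B) = 0\<close> on \<open>D\<close>. But then
  \<open>R(\<pi> 1\<^sub>B) - 1\<^sub>B\<close> lies in \<open>c\<^sub>0\<close> and equals \<open>-1\<close> on the infinite set \<open>B\<close>.
\<close>

definition ultra :: "'a filter \<Rightarrow> bool" where
  "ultra F \<longleftrightarrow> (\<forall>P. eventually P F \<or> eventually (\<lambda>x. \<not> P x) F)"

lemma ultra_if_minimal:
  assumes "U \<noteq> bot" and min: "\<And>G. G \<noteq> bot \<Longrightarrow> G \<le> U \<Longrightarrow> G = U"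
  shows "ultra U"
  unfolding ultra_def
proof
  fix P
  show "eventually P U \<or> eventually (\<lambda>x. \<not> P x) U"
  proof (rule disjCI)
    assume "\<not> eventually (\<lambda>x. \<not> P x) U"
    then have "inf U (principal {x. P x}) \<noteq> bot"
      by (simp add: trivial_limit_def eventually_inf_principal)
    then have "inf U (principal {x. P x}) = U" by (rule min) (rule inf_le1)
    moreover have "eventually P (inf U (principal {x. P x}))"
      by (simp add: eventually_inf_principal)
    ultimately show "eventually P U" by simp
  qed
qed

lemma exists_ultra_le:
  fixes F :: "'a filter"
  assumes "F \<noteq> bot"
  shows "\<exists>U\<le>F. U \<noteq> bot \<and> ultra U"
proof -
  let ?M = "{G. G \<le> F \<and> G \<noteq> bot}"
  have "\<exists>U\<in>?M. \<forall>G\<in>?M. G \<le> U \<longrightarrow> G = U"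
  proof (rule predicate_Zorn)
    show "partial_order_on ?M (relation_of (\<lambda>G H. H \<le> G) ?M)"
      by (rule partial_order_on_relation_ofI) (simp_all add: order_antisym)
    fix C assume C: "C \<in> Chains (relation_of (\<lambda>G H. H \<le> G) ?M)"
    then have C_sub: "C \<subseteq> ?M" and C_lin: "\<And>G H. G \<in> C \<Longrightarrow> H \<in> C \<Longrightarrow> G \<le> H \<or> H \<le> G"
      unfolding Chains_def relation_of_def by blast+
    show "\<exists>U\<in>?M. \<forall>G\<in>C. U \<le> G"
    proof (cases "C = {}")
      case True
      then show ?thesis using assms by blast
    next
      case False
      have "\<exists>x\<in>C. x \<le> inf G H" if "G \<in> C" "H \<in> C" for G H
        using C_lin[OF that] that by (metis inf.absorb_iff1 inf.absorb_iff2 order_refl)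
      then have "eventually P (Inf C) \<longleftrightarrow> (\<exists>G\<in>C. eventually P G)" for P
        by (rule eventually_Inf_base[OF False])
      then have "Inf C \<noteq> bot" using C_sub by (auto simp: trivial_limit_def)
      moreover obtain G where "G \<in> C" using False by blast
      then have "Inf C \<le> F" using C_sub by (blast intro: Inf_lower2)
      ultimately show ?thesis by (blast intro: Inf_lower)
    qed
  qed
  then obtain U where U: "U \<le> F" "U \<noteq> bot"
    and min: "\<And>G. G \<le> F \<Longrightarrow> G \<noteq> bot \<Longrightarrow> G \<le> U \<Longrightarrow> G = U"
    by blast
  have "ultra U"
  proof (rule ultra_if_minimal[OF U(2)])
    fix G assume "G \<noteq> bot" "G \<le> U"
    then show "G = U" using min order_trans[OF \<open>G \<le> U\<close> U(1)] by blast
  qed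
  with U show ?thesis by blast
qed

definition free_ultrafilter :: "'a filter \<Rightarrow> bool" where
  "free_ultrafilter U \<longleftrightarrow> ultra U \<and> U \<noteq> bot \<and> U \<le> cofinite"

lemma inf_cofinite_principal_eq_bot_iff: "inf cofinite (principal A) = bot \<longleftrightarrow> finite A"
  by (simp add: trivial_limit_def eventually_inf_principal eventually_cofinite)

lemma exists_free_ultrafilter_le:
  assumes "F \<noteq> bot" "F \<le> cofinite"
  shows "\<exists>U\<le>F. free_ultrafilter U"
  using exists_ultra_le[OF assms(1)] assms(2) unfolding free_ultrafilter_def
  by (meson order_trans)

lemma free_ultrafilter_eventually_infinite:
  assumes U: "free_ultrafilter U" and P: "eventually P U"
  shows "infinite {x. P x}"
proof
  assume "finite {x. P x}"
  then have "eventually (\<lambda>x. \<not> P x) U"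
    using U unfolding free_ultrafilter_def by (auto simp: eventually_cofinite intro: filter_leD)
  with P have "eventually (\<lambda>x. False) U" by (auto elim: eventually_rev_mp)
  then show False using U unfolding free_ultrafilter_def by (simp add: trivial_limit_def)
qed

lemma free_ultrafilter_tendsto_Lim:
  fixes h :: "'a \<Rightarrow> 'b::heine_borel"
  assumes U: "free_ultrafilter U" and "bounded (range h)"
  shows "(h \<longlongrightarrow> Lim U h) U"
proof -
  have nonbot: "U \<noteq> bot" and ultra: "ultra U" using U unfolding free_ultrafilter_def by blast+
  have "compact (closure (range h))" using assms(2) by (simp add: compact_closure)
  moreover have "filtermap h U \<noteq> bot" using nonbot by (simp add: filtermap_bot_iff)
  moreover have "eventually (\<lambda>y. y \<in> closure (range h)) (filtermap h U)"
    by (simp add: eventually_filtermap closure_subset[THEN subsetD])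
  ultimately obtain l where l: "inf (nhds l) (filtermap h U) \<noteq> bot"
    unfolding compact_filter by blast
  have "(h \<longlongrightarrow> l) U"
  proof (rule topological_tendstoI)
    fix S assume "open S" "l \<in> S"
    then have "eventually (\<lambda>y. y \<in> S) (nhds l)" by (rule eventually_nhds_in_open)
    show "eventually (\<lambda>x. h x \<in> S) U"
    proof (rule ccontr)
      assume "\<not> eventually (\<lambda>x. h x \<in> S) U"
      then have "eventually (\<lambda>y. y \<notin> S) (filtermap h U)"
        using ultra unfolding ultra_def eventually_filtermap by blast
      with \<open>eventually (\<lambda>y. y \<in> S) (nhds l)\<close> have "eventually (\<lambda>y. False) (inf (nhds l) (filtermap h U))"
        unfolding eventually_inf by blast
      with l show False by (simp add: trivial_limit_def)
    qed
  qed
  with nonbot show ?thesis by (simp add: tendsto_Lim)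
qed

lemma free_ultrafilter_Lim_bound:
  fixes h :: "'a \<Rightarrow> real"
  assumes U: "free_ultrafilter U" and "bounded (range h)"
    and "eventually (\<lambda>x. \<bar>h x - c\<bar> \<le> r) U"
  shows "\<bar>Lim U h - c\<bar> \<le> r"
proof -
  have "((\<lambda>x. \<bar>h x - c\<bar>) \<longlongrightarrow> \<bar>Lim U h - c\<bar>) U"
    by (intro tendsto_intros free_ultrafilter_tendsto_Lim assms)
  then show ?thesis using assms(3) U unfolding free_ultrafilter_def by (blast intro: tendsto_upperbound)
qed

lemma exists_free_ultrafilter_decseq:
  fixes A :: "nat \<Rightarrow> 'a set"
  assumes inf: "infinite (UNIV :: 'a set)" and "decseq A"
  shows "\<exists>U. free_ultrafilter U \<and> (\<forall>k. infinite (A k) \<longrightarrow> eventually (\<lambda>x. x \<in> A k) U)"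
proof (cases "\<exists>k. infinite (A k)")
  case False
  then show ?thesis using exists_free_ultrafilter_le[of cofinite] inf by auto
next
  case True
  let ?K = "{k. infinite (A k)}"
  let ?F = "\<lambda>k. inf cofinite (principal (A k))"
  have F_mono: "?F j \<le> ?F k" if "k \<le> j" for j k
    using \<open>decseq A\<close> that by (intro inf_mono) (auto simp: decseq_def)
  have "\<exists>x\<in>?K. ?F x \<le> inf (?F a) (?F b)" if "a \<in> ?K" "b \<in> ?K" for a b
  proof (rule bexI[of _ "max a b"])
    show "?F (max a b) \<le> inf (?F a) (?F b)" by (intro le_infI F_mono) simp_all
    show "max a b \<in> ?K" using that by (simp add: max_def)
  qed
  then have ev: "eventually P (INF k\<in>?K. ?F k) \<longleftrightarrow> (\<exists>k\<in>?K. eventually P (?F k))" for P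
    using True by (intro eventually_INF_base) auto
  have "(INF k\<in>?K. ?F k) \<noteq> bot"
    using ev[of "\<lambda>x. False"] by (auto simp: trivial_limit_def[symmetric] inf_cofinite_principal_eq_bot_iff)
  moreover have "(INF k\<in>?K. ?F k) \<le> cofinite"
    using True by (auto intro: INF_lower2)
  ultimately obtain U where "U \<le> (INF k\<in>?K. ?F k)" "free_ultrafilter U"
    using exists_free_ultrafilter_le by blast
  moreover have "eventually (\<lambda>x. x \<in> A k) (INF k\<in>?K. ?F k)" if "infinite (A k)" for k
    using that by (subst ev) (auto simp: eventually_inf_principal)
  ultimately show ?thesis by (blast intro: filter_leD)
qed

lemma finite_points_with_finite_neighbourhood:
  fixes \<Psi> :: "('a \<Rightarrow> real) set"
  assumes "finite \<Psi>" and bdd: "\<And>\<phi>. \<phi> \<in> \<Psi> \<Longrightarrow> bounded (range \<phi>)" and "\<epsilon> > 0"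
  shows "finite {x. finite {y. \<forall>\<phi>\<in>\<Psi>. \<bar>\<phi> y - \<phi> x\<bar> \<le> \<epsilon>}}"
    (is "finite ?D")
proof (rule ccontr)
  assume "infinite ?D"
  then have "inf cofinite (principal ?D) \<noteq> bot"
    by (simp add: inf_cofinite_principal_eq_bot_iff)
  then obtain V where V: "free_ultrafilter V" and "V \<le> principal ?D"
    using exists_free_ultrafilter_le[of "inf cofinite (principal ?D)"] by (auto simp: le_inf_iff)
  from \<open>V \<le> principal ?D\<close> have "eventually (\<lambda>x. x \<in> ?D) V"
    by (rule filter_leD) (simp add: eventually_principal)
  define P where "P y \<longleftrightarrow> (\<forall>\<phi>\<in>\<Psi>. \<bar>\<phi> y - Lim V \<phi>\<bar> < \<epsilon> / 2)" for y
  have "eventually P V"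
    unfolding P_def
  proof (intro eventually_ball_finite ballI \<open>finite \<Psi>\<close>)
    fix \<phi> assume "\<phi> \<in> \<Psi>"
    then have "(\<phi> \<longlongrightarrow> Lim V \<phi>) V" by (intro free_ultrafilter_tendsto_Lim V bdd)
    then show "eventually (\<lambda>y. \<bar>\<phi> y - Lim V \<phi>\<bar> < \<epsilon> / 2) V"
      using \<open>\<epsilon> > 0\<close> by (auto dest!: tendstoD[of _ _ _ "\<epsilon> / 2"] simp: dist_real_def)
  qed
  with \<open>eventually (\<lambda>x. x \<in> ?D) V\<close> have "eventually (\<lambda>x. x \<in> ?D \<and> P x) V"
    by (rule eventually_conj)
  then obtain x where "x \<in> ?D" "P x"
    using V unfolding free_ultrafilter_def by (blast dest: eventually_happens')
  have "{y. P y} \<subseteq> {y. \<forall>\<phi>\<in>\<Psi>. \<bar>\<phi> y - \<phi> x\<bar> \<le> \<epsilon>}"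
  proof (intro subsetI CollectI ballI)
    fix y \<phi> assume "y \<in> {y. P y}" "\<phi> \<in> \<Psi>"
    then have "\<bar>\<phi> y - Lim V \<phi>\<bar> < \<epsilon> / 2" "\<bar>\<phi> x - Lim V \<phi>\<bar> < \<epsilon> / 2"
      using \<open>P x\<close> unfolding P_def by auto
    then show "\<bar>\<phi> y - \<phi> x\<bar> \<le> \<epsilon>" by linarith
  qed
  moreover have "infinite {y. P y}"
    using free_ultrafilter_eventually_infinite[OF V \<open>eventually P V\<close>] .
  ultimately show False using \<open>x \<in> ?D\<close> finite_subset by blast
qed

lemma exists_free_ultrafilters_approximating:
  fixes \<Phi> :: "nat \<Rightarrow> ('a \<Rightarrow> real) set"
  assumes inf: "infinite (UNIV :: 'a set)"
    and fin: "\<And>n. finite (\<Phi> n)" and bdd: "\<And>n \<phi>. \<phi> \<in> \<Phi> n \<Longrightarrow> bounded (range \<phi>)"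
  shows "\<exists>U. (\<forall>x. free_ultrafilter (U x)) \<and>
    (\<forall>n. finite {x. \<exists>\<phi>\<in>\<Phi> n. 1 / Suc n < \<bar>Lim (U x) \<phi> - \<phi> x\<bar>})"
proof -
  define near where
    "near n x = {y. \<forall>j\<le>n. \<forall>\<phi>\<in>\<Phi> j. \<bar>\<phi> y - \<phi> x\<bar> \<le> 1 / Suc j}" for n x
  \<comment> \<open>\<open>U x\<close> contains every infinite \<open>near n x\<close>; the exceptional points, where \<open>near n x\<close>
    is finite, are finitely many by \<open>finite_points_with_finite_neighbourhood\<close>.\<close>
  have "decseq (\<lambda>n. near n x)" for x
    unfolding decseq_def near_def by auto
  then have "\<forall>x. \<exists>V. free_ultrafilter V \<and> (\<forall>n. infinite (near n x) \<longrightarrow> eventually (\<lambda>y. y \<in> near n x) V)"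
    using exists_free_ultrafilter_decseq[OF inf] by blast
  then obtain U where U: "\<And>x. free_ultrafilter (U x)"
    and U_near: "\<And>x n. infinite (near n x) \<Longrightarrow> eventually (\<lambda>y. y \<in> near n x) (U x)"
    by metis
  have "finite {x. \<exists>\<phi>\<in>\<Phi> n. 1 / Suc n < \<bar>Lim (U x) \<phi> - \<phi> x\<bar>}" for n
  proof -
    let ?\<Psi> = "\<Union>j\<le>n. \<Phi> j"
    have "{y. \<forall>\<phi>\<in>?\<Psi>. \<bar>\<phi> y - \<phi> x\<bar> \<le> 1 / Suc n} \<subseteq> near n x" for x
      unfolding near_def
    proof (intro subsetI CollectI allI impI ballI)
      fix y j \<phi> assume y: "y \<in> {y. \<forall>\<phi>\<in>?\<Psi>. \<bar>\<phi> y - \<phi> x\<bar> \<le> 1 / Suc n}" and "j \<le> n" "\<phi> \<in> \<Phi> j"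
      then have "\<bar>\<phi> y - \<phi> x\<bar> \<le> 1 / Suc n" by blast
      also have "\<dots> \<le> 1 / Suc j" using \<open>j \<le> n\<close> by (simp add: frac_le)
      finally show "\<bar>\<phi> y - \<phi> x\<bar> \<le> 1 / Suc j" .
    qed
    then have "{x. finite (near n x)} \<subseteq> {x. finite {y. \<forall>\<phi>\<in>?\<Psi>. \<bar>\<phi> y - \<phi> x\<bar> \<le> 1 / Suc n}}"
      using finite_subset by blast
    moreover have "finite {x. finite {y. \<forall>\<phi>\<in>?\<Psi>. \<bar>\<phi> y - \<phi> x\<bar> \<le> 1 / Suc n}}"
      by (rule finite_points_with_finite_neighbourhood) (use fin bdd in auto)
    ultimately have "finite {x. finite (near n x)}" by (rule finite_subset)
    have "\<bar>Lim (U x) \<phi> - \<phi> x\<bar> \<le> 1 / Suc n" if "infinite (near n x)" "\<phi> \<in> \<Phi> n" for x \<phi>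
    proof (rule free_ultrafilter_Lim_bound[OF U bdd[OF that(2)]])
      show "eventually (\<lambda>y. \<bar>\<phi> y - \<phi> x\<bar> \<le> 1 / Suc n) (U x)"
        using U_near[OF that(1)] by eventually_elim (use that(2) in \<open>auto simp: near_def\<close>)
    qed
    then have "{x. \<exists>\<phi>\<in>\<Phi> n. 1 / Suc n < \<bar>Lim (U x) \<phi> - \<phi> x\<bar>} \<subseteq> {x. finite (near n x)}"
      by (auto simp: not_le[symmetric])
    with \<open>finite {x. finite (near n x)}\<close> show ?thesis by (rule finite_subset[rotated])
  qed
  with U show ?thesis by blast
qed

lemma infinite_UNIV_discrete:
  assumes "infinite (UNIV :: 'a set)"
  shows "infinite (UNIV :: 'a discrete set)"
proof
  assume "finite (UNIV :: 'a discrete set)"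
  then have "finite (range (discrete :: 'a \<Rightarrow> 'a discrete))" by (rule finite_subset[rotated]) simp
  moreover have "inj (discrete :: 'a \<Rightarrow> 'a discrete)" by (simp add: inj_on_def discrete_inject)
  ultimately show False using assms finite_imageD by blast
qed

lemma apply_Bcontfun_discrete:
  fixes h :: "'a discrete \<Rightarrow> 'b::real_normed_vector"
  assumes "\<And>x. norm (h x) \<le> B"
  shows "apply_bcontfun (Bcontfun h) = h"
proof -
  have "continuous_on UNIV h" by (simp add: continuous_on_open_invariant open_discrete)
  then have "h \<in> bcontfun" using assms by (rule bcontfun_normI)
  then show ?thesis by (rule Bcontfun_inverse)
qed

lemma c0_if_finite_support:
  assumes "finite {x. apply_bcontfun f x \<noteq> 0}"
  shows "f \<in> c0"
  unfolding c0_def by (auto intro: finite_subset[OF _ assms])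

lemma tendsto_zero_if_c0:
  assumes "U \<le> cofinite" "f \<in> c0"
  shows "(apply_bcontfun f \<longlongrightarrow> 0) U"
proof (rule tendstoI)
  fix e :: real assume "e > 0"
  with \<open>f \<in> c0\<close> have "eventually (\<lambda>x. \<bar>apply_bcontfun f x\<bar> < e) cofinite"
    unfolding c0_def by (simp add: eventually_cofinite not_less)
  then show "eventually (\<lambda>x. dist (apply_bcontfun f x) 0 < e) U"
    using assms(1) by (auto intro: filter_leD)
qed

lemma abs_Lim_le_norm:
  assumes "free_ultrafilter U"
  shows "\<bar>Lim U (apply_bcontfun (f :: 'a::topological_space \<Rightarrow>\<^sub>C real))\<bar> \<le> norm f"
  using free_ultrafilter_Lim_bound[OF assms bounded_apply_bcontfun, of f 0 "norm f"] norm_bounded[of f]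
  by simp

lemma bounded_linear_Lim_free_ultrafilter:
  assumes U: "free_ultrafilter U"
  shows "bounded_linear (\<lambda>f :: 'a::topological_space \<Rightarrow>\<^sub>C real. Lim U (apply_bcontfun f))"
proof -
  have nonbot: "U \<noteq> bot" using U unfolding free_ultrafilter_def by blast
  note lim = free_ultrafilter_tendsto_Lim[OF U bounded_apply_bcontfun]
  show ?thesis
  proof (rule bounded_linear_intro[where K = 1])
    fix f g :: "'a \<Rightarrow>\<^sub>C real" and c :: real
    show "Lim U (apply_bcontfun (f + g)) = Lim U (apply_bcontfun f) + Lim U (apply_bcontfun g)"
      using tendsto_add[OF lim[of f] lim[of g]] nonbot by (simp add: tendsto_Lim)
    show "Lim U (apply_bcontfun (c *\<^sub>R f)) = c *\<^sub>R Lim U (apply_bcontfun f)"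
      using tendsto_mult[OF tendsto_const lim[of f]] nonbot by (simp add: tendsto_Lim)
    show "norm (Lim U (apply_bcontfun f)) \<le> norm f * 1" using abs_Lim_le_norm[OF U] by simp
  qed
qed

lemma compact_closure_image_finite_net:
  fixes f :: "'a \<Rightarrow> 'b::metric_space"
  assumes "compact (closure (f ` A))" and "e > 0"
  obtains N where "N \<subseteq> A" "finite N" "\<And>x. x \<in> A \<Longrightarrow> \<exists>y\<in>N. dist (f x) (f y) < e"
proof -
  have cover_A: "closure (f ` A) \<subseteq> (\<Union>y\<in>A. ball (f y) e)"
  proof
    fix u assume "u \<in> closure (f ` A)"
    then obtain y where "y \<in> A" "dist u (f y) < e"
      using closure_approachableD[OF _ \<open>e > 0\<close>] by blast
    then show "u \<in> (\<Union>y\<in>A. ball (f y) e)" by (auto simp: dist_commute)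
  qed
  obtain N where "N \<subseteq> A" "finite N" and cover: "closure (f ` A) \<subseteq> (\<Union>y\<in>N. ball (f y) e)"
    by (rule compactE_image[OF assms(1) _ cover_A]) simp
  moreover have "\<exists>y\<in>N. dist (f x) (f y) < e" if "x \<in> A" for x
  proof -
    have "f x \<in> closure (f ` A)" using that by (simp add: closure_def)
    then obtain y where "y \<in> N" "f x \<in> ball (f y) e" using cover by (auto simp del: mem_ball)
    then show ?thesis by (auto simp: dist_commute)
  qed
  ultimately show thesis using that by blast
qed

lemma compact_operator_if_dominated:
  fixes S :: "'a::real_normed_vector \<Rightarrow> 'b::{real_normed_vector, complete_space}" and T :: "'a \<Rightarrow> 'c::real_normed_vector"
  assumes S: "bounded_linear S" and T: "compact_operator T" and dom: "\<And>x. norm (S x) \<le> norm (T x)"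
  shows "compact_operator S"
  unfolding compact_operator_def compact_eq_totally_bounded
proof (intro conjI allI impI S)
  show "complete (closure (S ` ball 0 1))" by (simp add: complete_eq_closed)
  fix e :: real assume "e > 0"
  moreover have "compact (closure (T ` ball 0 1))" using T unfolding compact_operator_def by blast
  ultimately obtain N where N: "N \<subseteq> ball 0 1" "finite N"
    and dense: "\<And>z. z \<in> ball 0 1 \<Longrightarrow> \<exists>w\<in>N. dist (T z) (T w) < e / 2"
    using compact_closure_image_finite_net[of T "ball 0 1" "e / 2"] by auto
  have "closure (S ` ball 0 1) \<subseteq> (\<Union>w\<in>N. ball (S w) e)"
  proof
    fix y assume "y \<in> closure (S ` ball 0 1)"
    from closure_approachableD[OF this, of "e / 2"] \<open>e > 0\<close>
    obtain u where "u \<in> S ` ball 0 1" "dist y u < e / 2" by auto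
    then obtain z where z: "z \<in> ball 0 1" "dist y (S z) < e / 2" by blast
    then obtain w where w: "w \<in> N" "dist (T z) (T w) < e / 2" using dense by blast
    have "dist (S z) (S w) = norm (S (z - w))" by (simp add: dist_norm linear_diff[OF bounded_linear.linear[OF S]])
    also have "\<dots> \<le> norm (T (z - w))" by (rule dom)
    also have "\<dots> = dist (T z) (T w)"
      using T unfolding compact_operator_def by (simp add: dist_norm linear_diff[OF bounded_linear.linear])
    finally have "dist y (S w) < e" using z(2) w(2) dist_triangle[of y "S w" "S z"] by linarith
    then show "y \<in> (\<Union>w\<in>N. ball (S w) e)" using w(1) by (auto simp: dist_commute)
  qed
  then show "\<exists>k. finite k \<and> closure (S ` ball 0 1) \<subseteq> (\<Union>x\<in>k. ball x e)"
    using N(2) by (intro exI[of _ "S ` N"]) auto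
qed

lemma uncountable_UNIV_nat_set: "uncountable (UNIV :: nat set set)"
  unfolding uncountable_def using Cantors_theorem[of "UNIV :: nat set"] by auto

lemma exists_almost_disjoint_family:
  assumes "infinite (UNIV :: 'a set)"
  obtains A :: "nat set \<Rightarrow> 'a set"
  where "\<And>S. infinite (A S)" "\<And>S S'. S \<noteq> S' \<Longrightarrow> finite (A S \<inter> A S')" "countable (\<Union>S. A S)"
proof -
  obtain e :: "nat \<Rightarrow> 'a" where "inj e"
    using infinite_countable_subset[OF assms] by blast
  define code where "code S n = e (to_nat (map (\<lambda>i. i \<in> S) [0..<n]))" for S n
  have code_eq: "n = m \<and> (\<forall>i<n. i \<in> S \<longleftrightarrow> i \<in> S')" if "code S n = code S' m" for S S' n m
  proof -
    have eq: "map (\<lambda>i. i \<in> S) [0..<n] = map (\<lambda>i. i \<in> S') [0..<m]"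
      using injD[OF \<open>inj e\<close> that[unfolded code_def]] by simp
    then have "n = m" by (metis length_map length_upt diff_zero)
    moreover have "i \<in> S \<longleftrightarrow> i \<in> S'" if "i < n" for i
      using arg_cong[OF eq, of "\<lambda>xs. xs ! i"] that \<open>n = m\<close> by simp
    ultimately show ?thesis by blast
  qed
  \<comment> \<open>\<open>A S\<close> codes the initial segments of \<open>S\<close>; distinct \<open>S\<close>, \<open>S'\<close> share only the
    segments below their first difference.\<close>
  define A where "A S = range (code S)" for S
  show thesis
  proof
    show "infinite (A S)" for S
      unfolding A_def using code_eq by (intro range_inj_infinite injI) blast
    show "finite (A S \<inter> A S')" if "S \<noteq> S'" for S S'
    proof -
      obtain k where k: "k \<in> S \<longleftrightarrow> k \<notin> S'" using \<open>S \<noteq> S'\<close> by blast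
      have "A S \<inter> A S' \<subseteq> code S ` {..k}"
      proof
        fix x assume "x \<in> A S \<inter> A S'"
        then obtain n m where "x = code S n" "code S n = code S' m" unfolding A_def by auto
        then have "n \<le> k" using code_eq k by (meson not_le)
        then show "x \<in> code S ` {..k}" using \<open>x = code S n\<close> by simp
      qed
      then show ?thesis by (rule finite_subset) simp
    qed
    show "countable (\<Union>S. A S)"
      by (rule countable_subset[of _ "range e"]) (auto simp: A_def code_def)
  qed
qed

definition indicator_linf :: "'g discrete set \<Rightarrow> 'g linf" where
  "indicator_linf B = Bcontfun (indicator B)"

lemma apply_indicator_linf: "apply_bcontfun (indicator_linf B) = indicator B"
  unfolding indicator_linf_def by (rule apply_Bcontfun_discrete[of _ 1]) (simp add: indicator_def)

lemma apply_bcontfun_sum: "apply_bcontfun (\<Sum>s\<in>G. f s) x = (\<Sum>s\<in>G. apply_bcontfun (f s) x)"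
  by (induction G rule: infinite_finite_induct) simp_all

locale c0_quotient = bounded_linear \<pi> for \<pi> :: "'g linf \<Rightarrow> 'q::banach" +
  assumes surj: "surj \<pi>"
    and kernel: "{f. \<pi> f = 0} = c0"
    and norm_quotient: "norm q = (INF f\<in>{f. \<pi> f = q}. norm f)"
begin

lemma pi_eq_iff: "\<pi> f = \<pi> g \<longleftrightarrow> f - g \<in> c0"
proof -
  have "\<pi> f = \<pi> g \<longleftrightarrow> \<pi> (f - g) = 0" by (simp add: diff)
  then show ?thesis using kernel by blast
qed

lemma norm_pi_le: "norm (\<pi> f) \<le> norm f"
  unfolding norm_quotient[of "\<pi> f"] by (rule cINF_lower) (auto intro: bdd_belowI[of _ 0])

lemma norm_pi_ge:
  assumes "\<And>g. \<pi> g = \<pi> f \<Longrightarrow> c \<le> norm g"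
  shows "c \<le> norm (\<pi> f)"
  unfolding norm_quotient[of "\<pi> f"] by (rule cINF_greatest) (use assms in auto)

lemma finite_large_if_norm_pi_less:
  assumes "norm (\<pi> h) < r"
  shows "finite {x. r \<le> \<bar>apply_bcontfun h x\<bar>}"
proof -
  have "\<exists>g. \<pi> g = \<pi> h \<and> norm g < r"
  proof (rule ccontr)
    assume "\<nexists>g. \<pi> g = \<pi> h \<and> norm g < r"
    then have "r \<le> norm (\<pi> h)" by (intro norm_pi_ge) (auto simp: not_less)
    with assms show False by simp
  qed
  then obtain g where g: "\<pi> g = \<pi> h" "norm g < r" by blast
  then have "h - g \<in> c0" using pi_eq_iff[of h g] by simp
  then have "finite {x. r - norm g \<le> \<bar>apply_bcontfun (h - g) x\<bar>}"
    using g(2) unfolding c0_def by simp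
  moreover have "{x. r \<le> \<bar>apply_bcontfun h x\<bar>} \<subseteq> {x. r - norm g \<le> \<bar>apply_bcontfun (h - g) x\<bar>}"
  proof (intro subsetI CollectI)
    fix x assume "x \<in> {x. r \<le> \<bar>apply_bcontfun h x\<bar>}"
    moreover have "\<bar>apply_bcontfun g x\<bar> \<le> norm g" using norm_bounded[of g x] by simp
    ultimately show "r - norm g \<le> \<bar>apply_bcontfun (h - g) x\<bar>" by auto
  qed
  ultimately show ?thesis by (rule finite_subset[rotated])
qed

lemma norm_pi_le_if_cofinitely_bounded:
  assumes "0 \<le> B" and "finite {x. B < \<bar>apply_bcontfun f x\<bar>}"
  shows "norm (\<pi> f) \<le> B"
proof -
  define g where "g = Bcontfun (\<lambda>x. max (- B) (min B (apply_bcontfun f x)))"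
  have g_apply: "apply_bcontfun g = (\<lambda>x. max (- B) (min B (apply_bcontfun f x)))"
    unfolding g_def by (rule apply_Bcontfun_discrete[of _ B]) (use \<open>0 \<le> B\<close> in auto)
  have "{x. apply_bcontfun (f - g) x \<noteq> 0} \<subseteq> {x. B < \<bar>apply_bcontfun f x\<bar>}"
    by (auto simp: g_apply)
  then have "f - g \<in> c0"
    using assms(2) by (blast intro: c0_if_finite_support finite_subset)
  then have "\<pi> f = \<pi> g" using pi_eq_iff by simp
  moreover have "norm g \<le> B"
    by (rule norm_bound) (use \<open>0 \<le> B\<close> in \<open>auto simp: g_apply\<close>)
  ultimately show ?thesis using norm_pi_le[of g] by simp
qed

lemma norm_pi_sum_indicators_le:
  assumes "finite G" and disj: "\<And>s t. s \<in> G \<Longrightarrow> t \<in> G \<Longrightarrow> s \<noteq> t \<Longrightarrow> finite (B s \<inter> B t)"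
    and c: "\<And>s. s \<in> G \<Longrightarrow> \<bar>c s\<bar> \<le> 1"
  shows "norm (\<pi> (\<Sum>s\<in>G. c s *\<^sub>R indicator_linf (B s))) \<le> 1"
proof (rule norm_pi_le_if_cofinitely_bounded)
  let ?v = "\<Sum>s\<in>G. c s *\<^sub>R indicator_linf (B s)"
  have v: "apply_bcontfun ?v x = (\<Sum>s\<in>G. c s * indicator (B s) x)" for x
    by (simp add: apply_bcontfun_sum apply_indicator_linf)
  have "\<bar>apply_bcontfun ?v x\<bar> \<le> 1" if "x \<notin> (\<Union>s\<in>G. \<Union>t\<in>G - {s}. B s \<inter> B t)" for x
  proof (cases "\<exists>s\<in>G. x \<in> B s")
    case False
    then show ?thesis by (simp add: v indicator_def)
  next
    case True
    then obtain s where s: "s \<in> G" "x \<in> B s" by blast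
    have "x \<notin> B t" if "t \<in> G - {s}" for t
      using that s \<open>x \<notin> (\<Union>s\<in>G. \<Union>t\<in>G - {s}. B s \<inter> B t)\<close> by blast
    then have "(\<Sum>t\<in>G - {s}. c t * indicator (B t) x) = 0" by (simp add: indicator_def)
    moreover have "apply_bcontfun ?v x = c s * indicator (B s) x + (\<Sum>t\<in>G - {s}. c t * indicator (B t) x)"
      unfolding v using \<open>finite G\<close> s(1) by (rule sum.remove)
    ultimately show ?thesis using c[OF s(1)] s(2) by simp
  qed
  then have "{x. 1 < \<bar>apply_bcontfun ?v x\<bar>} \<subseteq> (\<Union>s\<in>G. \<Union>t\<in>G - {s}. B s \<inter> B t)"
    by force
  moreover have "finite (\<Union>s\<in>G. \<Union>t\<in>G - {s}. B s \<inter> B t)"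
    using \<open>finite G\<close> disj by blast
  ultimately show "finite {x. 1 < \<bar>apply_bcontfun ?v x\<bar>}" by (rule finite_subset)
qed simp

definition lift :: "'q \<Rightarrow> 'g linf" where
  "lift q = (SOME f. \<pi> f = q)"

lemma pi_lift [simp]: "\<pi> (lift q) = q"
  unfolding lift_def by (rule someI_ex) (use surjD[OF surj, of q] in blast)

definition ulim :: "'g discrete filter \<Rightarrow> 'q \<Rightarrow> real" where
  "ulim U q = Lim U (apply_bcontfun (lift q))"

lemma ulim_pi:
  assumes U: "free_ultrafilter U"
  shows "ulim U (\<pi> f) = Lim U (apply_bcontfun f)"
proof -
  interpret Lim: bounded_linear "\<lambda>f :: 'g linf. Lim U (apply_bcontfun f)"
    by (rule bounded_linear_Lim_free_ultrafilter[OF U])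
  have "lift (\<pi> f) - f \<in> c0" using pi_eq_iff[of "lift (\<pi> f)" f] by simp
  then have "Lim U (apply_bcontfun (lift (\<pi> f) - f)) = 0"
    using U unfolding free_ultrafilter_def by (intro tendsto_Lim tendsto_zero_if_c0) auto
  then show ?thesis unfolding ulim_def Lim.diff by simp
qed

lemma abs_ulim_le:
  assumes U: "free_ultrafilter U"
  shows "\<bar>ulim U q\<bar> \<le> norm q"
proof -
  have "\<bar>ulim U (\<pi> (lift q))\<bar> \<le> norm (\<pi> (lift q))"
  proof (rule norm_pi_ge)
    fix g assume "\<pi> g = \<pi> (lift q)"
    then have "ulim U (\<pi> (lift q)) = Lim U (apply_bcontfun g)" using ulim_pi[OF U, of g] by simp
    also have "\<bar>\<dots>\<bar> \<le> norm g" by (rule abs_Lim_le_norm[OF U])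
    finally show "\<bar>ulim U (\<pi> (lift q))\<bar> \<le> norm g" .
  qed
  then show ?thesis by simp
qed

lemma ulim_add:
  assumes U: "free_ultrafilter U"
  shows "ulim U (p + q) = ulim U p + ulim U q"
proof -
  interpret Lim: bounded_linear "\<lambda>f :: 'g linf. Lim U (apply_bcontfun f)"
    by (rule bounded_linear_Lim_free_ultrafilter[OF U])
  have "ulim U (p + q) = ulim U (\<pi> (lift p + lift q))" by (simp add: add)
  also have "\<dots> = Lim U (apply_bcontfun (lift p + lift q))" by (rule ulim_pi[OF U])
  finally show ?thesis by (simp only: Lim.add ulim_def)
qed

lemma ulim_scaleR:
  assumes U: "free_ultrafilter U"
  shows "ulim U (c *\<^sub>R q) = c * ulim U q"
proof -
  interpret Lim: bounded_linear "\<lambda>f :: 'g linf. Lim U (apply_bcontfun f)"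
    by (rule bounded_linear_Lim_free_ultrafilter[OF U])
  have "ulim U (c *\<^sub>R q) = ulim U (\<pi> (c *\<^sub>R lift q))" by (simp add: scaleR)
  also have "\<dots> = Lim U (apply_bcontfun (c *\<^sub>R lift q))" by (rule ulim_pi[OF U])
  finally show ?thesis by (simp only: Lim.scaleR ulim_def) simp
qed

end

locale c0_quotient_compact_lifting = c0_quotient \<pi> for \<pi> :: "'g linf \<Rightarrow> 'q::banach" +
  fixes T :: "'z::banach \<Rightarrow> 'q" and N :: "nat \<Rightarrow> 'z set" and U :: "'g discrete \<Rightarrow> 'g discrete filter"
  assumes compact_T: "compact_operator T"
    and net_dense: "\<And>z n. z \<in> ball 0 1 \<Longrightarrow> \<exists>w\<in>N n. norm (T z - T w) < 1 / Suc n"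
    and free_U: "\<And>\<gamma>. free_ultrafilter (U \<gamma>)"
    and U_approx: "\<And>n. finite {\<gamma>. \<exists>w\<in>N n.
       1 / Suc n < \<bar>Lim (U \<gamma>) (apply_bcontfun (lift (T w))) - apply_bcontfun (lift (T w)) \<gamma>\<bar>}"
begin

sublocale T: bounded_linear T
  using compact_T unfolding compact_operator_def by blast

definition S :: "'z \<Rightarrow> 'g linf" where
  "S z = Bcontfun (\<lambda>\<gamma>. ulim (U \<gamma>) (T z))"

lemma S_apply: "apply_bcontfun (S z) \<gamma> = ulim (U \<gamma>) (T z)"
  unfolding S_def using abs_ulim_le[OF free_U] by (subst apply_Bcontfun_discrete) auto

lemma norm_S_le: "norm (S z) \<le> norm (T z)"
  by (rule norm_bound) (simp add: S_apply abs_ulim_le[OF free_U])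

lemma bounded_linear_S: "bounded_linear S"
proof (rule bounded_linear_intro[where K = "onorm T"])
  fix x y :: 'z and c :: real
  show "S (x + y) = S x + S y"
    by (rule bcontfun_eqI) (simp add: S_apply T.add ulim_add[OF free_U])
  show "S (c *\<^sub>R x) = c *\<^sub>R S x"
    by (rule bcontfun_eqI) (simp add: S_apply T.scaleR ulim_scaleR[OF free_U])
  show "norm (S x) \<le> norm x * onorm T"
    using norm_S_le[of x] onorm[OF T.bounded_linear_axioms, of x] by (simp add: mult.commute)
qed

lemma S_minus_lift_in_c0:
  assumes z: "z \<in> ball 0 1"
  shows "S z - lift (T z) \<in> c0"
  unfolding c0_def
proof (intro CollectI allI impI)
  fix e :: real assume "e > 0"
  then obtain n where n: "inverse (real (Suc n)) < e / 3"
    using reals_Archimedean[of "e / 3"] by auto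
  define r where "r = 1 / real (Suc n)"
  obtain w where w: "w \<in> N n" "norm (T z - T w) < r"
    using net_dense[OF z] unfolding r_def by blast
  define h where "h = lift (T z) - lift (T w)"
  have pi_h: "\<pi> h = T z - T w" by (simp add: h_def diff)
  let ?bad = "{\<gamma>. \<exists>w\<in>N n. r < \<bar>Lim (U \<gamma>) (apply_bcontfun (lift (T w))) - apply_bcontfun (lift (T w)) \<gamma>\<bar>}"
  have "\<bar>apply_bcontfun (S z - lift (T z)) \<gamma>\<bar> < 3 * r"
    if "\<gamma> \<notin> ?bad" "\<bar>apply_bcontfun h \<gamma>\<bar> < r" for \<gamma>
  proof -
    have "ulim (U \<gamma>) (T z) = ulim (U \<gamma>) (\<pi> h + \<pi> (lift (T w)))" by (simp add: pi_h)
    also have "\<dots> = Lim (U \<gamma>) (apply_bcontfun h) + Lim (U \<gamma>) (apply_bcontfun (lift (T w)))"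
      by (simp only: ulim_add[OF free_U] ulim_pi[OF free_U])
    finally have "apply_bcontfun (S z - lift (T z)) \<gamma> =
        Lim (U \<gamma>) (apply_bcontfun h) +
        (Lim (U \<gamma>) (apply_bcontfun (lift (T w))) - apply_bcontfun (lift (T w)) \<gamma>) - apply_bcontfun h \<gamma>"
      by (simp add: S_apply h_def)
    moreover have "\<bar>Lim (U \<gamma>) (apply_bcontfun h)\<bar> < r"
      using abs_ulim_le[OF free_U[of \<gamma>], of "\<pi> h"] ulim_pi[OF free_U[of \<gamma>], of h] pi_h w(2) by simp
    moreover have "\<bar>Lim (U \<gamma>) (apply_bcontfun (lift (T w))) - apply_bcontfun (lift (T w)) \<gamma>\<bar> \<le> r"
      using that(1) w(1) by (auto simp: not_less)
    ultimately show ?thesis using that(2) by linarith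
  qed
  then have "{\<gamma>. e \<le> \<bar>apply_bcontfun (S z - lift (T z)) \<gamma>\<bar>} \<subseteq> ?bad \<union> {\<gamma>. r \<le> \<bar>apply_bcontfun h \<gamma>\<bar>}"
    using n unfolding r_def by (force simp: inverse_eq_divide)
  moreover have "finite ?bad" using U_approx[of n] unfolding r_def .
  moreover have "finite {\<gamma>. r \<le> \<bar>apply_bcontfun h \<gamma>\<bar>}"
    using pi_h w(2) by (intro finite_large_if_norm_pi_less) simp
  ultimately show "finite {\<gamma>. e \<le> \<bar>apply_bcontfun (S z - lift (T z)) \<gamma>\<bar>}"
    by (meson finite_Un finite_subset)
qed

lemma pi_S: "\<pi> (S z) = T z"
proof -
  interpret S: bounded_linear S by (rule bounded_linear_S)
  define t where "t = norm z + 1"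
  have "t > 0" unfolding t_def by (simp add: add_nonneg_pos)
  have "(1 / t) *\<^sub>R z \<in> ball 0 1" using \<open>t > 0\<close> by (simp add: t_def field_simps)
  then have "\<pi> (S ((1 / t) *\<^sub>R z)) = \<pi> (lift (T ((1 / t) *\<^sub>R z)))"
    using S_minus_lift_in_c0 pi_eq_iff by blast
  then have "\<pi> (S ((1 / t) *\<^sub>R z)) = T ((1 / t) *\<^sub>R z)" by simp
  then have "(1 / t) *\<^sub>R \<pi> (S z) = (1 / t) *\<^sub>R T z" by (simp add: S.scaleR T.scaleR scaleR)
  then show ?thesis using \<open>t > 0\<close> by simp
qed

lemma norm_S: "norm (S z) = norm (T z)"
  using norm_pi_le[of "S z"] norm_S_le[of z] by (simp add: pi_S)

theorem compact_lifting: "compact_operator S \<and> \<pi> \<circ> S = T \<and> onorm S = onorm T"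
proof (intro conjI)
  show "compact_operator S"
    by (rule compact_operator_if_dominated[OF bounded_linear_S compact_T norm_S_le])
  show "\<pi> \<circ> S = T" by (simp add: pi_S fun_eq_iff)
  show "onorm S = onorm T" by (simp add: onorm_def norm_S)
qed

end

context c0_quotient
begin

theorem exists_compact_lifting:
  fixes T :: "'z::banach \<Rightarrow> 'q"
  assumes inf: "infinite (UNIV :: 'g set)" and T: "compact_operator T"
  shows "\<exists>S. compact_operator S \<and> \<pi> \<circ> S = T \<and> onorm S = onorm T"
proof -
  have "\<exists>N. finite N \<and> (\<forall>z\<in>ball 0 1. \<exists>w\<in>N. norm (T z - T w) < 1 / Suc n)" for n
    using T unfolding compact_operator_def
    by (auto simp: dist_norm elim!: compact_closure_image_finite_net[of T "ball 0 1" "1 / Suc n"])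
  then obtain N where N_finite: "\<And>n. finite (N n)"
    and N_dense: "\<And>n z. z \<in> ball 0 1 \<Longrightarrow> \<exists>w\<in>N n. norm (T z - T w) < 1 / Suc n"
    by metis
  define \<Phi> where "\<Phi> n = (\<lambda>w. apply_bcontfun (lift (T w))) ` N n" for n
  obtain U where "\<And>\<gamma>. free_ultrafilter (U \<gamma>)"
    and "\<And>n. finite {\<gamma>. \<exists>\<phi>\<in>\<Phi> n. 1 / Suc n < \<bar>Lim (U \<gamma>) \<phi> - \<phi> \<gamma>\<bar>}"
    using exists_free_ultrafilters_approximating[OF infinite_UNIV_discrete[OF inf], of \<Phi>] N_finite
    by (auto simp: \<Phi>_def)
  then interpret c0_quotient_compact_lifting \<pi> T N U
    using T N_dense by unfold_locales (auto simp: \<Phi>_def)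
  show ?thesis using compact_lifting by blast
qed

lemma finite_large_coefficients:
  fixes R :: "'q \<Rightarrow> 'g linf"
  assumes R: "bounded_linear R" and disj: "\<And>s t. s \<noteq> t \<Longrightarrow> finite (B s \<inter> B t)" and "r > 0"
  shows "finite {s. r \<le> \<bar>apply_bcontfun (R (\<pi> (indicator_linf (B s)))) y\<bar>}"
    (is "finite {s. r \<le> \<bar>?a s\<bar>}")
proof (rule ccontr)
  interpret R: bounded_linear R by (rule R)
  assume "infinite {s. r \<le> \<bar>?a s\<bar>}"
  then obtain G where G: "finite G" "card G = nat \<lceil>onorm R / r\<rceil> + 1" "G \<subseteq> {s. r \<le> \<bar>?a s\<bar>}"
    using infinite_arbitrarily_large by blast
  define v where "v = (\<Sum>s\<in>G. sgn (?a s) *\<^sub>R indicator_linf (B s))"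
  have "norm (\<pi> v) \<le> 1"
    unfolding v_def using G(1) disj by (rule norm_pi_sum_indicators_le) (auto simp: sgn_real_def)
  have "real (card G) * r \<le> (\<Sum>s\<in>G. \<bar>?a s\<bar>)"
    using G(3) by (intro sum_bounded_below) auto
  also have "\<dots> = apply_bcontfun (R (\<pi> v)) y"
    by (simp add: v_def sum scaleR R.sum R.scaleR apply_bcontfun_sum abs_sgn mult.commute)
  also have "\<dots> \<le> norm (R (\<pi> v))" using norm_bounded[of "R (\<pi> v)" y] by simp
  also have "\<dots> \<le> onorm R * norm (\<pi> v)" by (rule onorm[OF R])
  also have "\<dots> \<le> onorm R" using \<open>norm (\<pi> v) \<le> 1\<close> onorm_pos_le[OF R] by (simp add: mult_left_le)
  finally have "real (card G) * r \<le> onorm R" .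
  moreover have "onorm R < real (card G) * r"
    using G(2) \<open>r > 0\<close> by (simp add: pos_divide_less_eq[symmetric]) linarith
  ultimately show False by simp
qed

theorem no_bounded_right_inverse:
  fixes R :: "'q \<Rightarrow> 'g linf"
  assumes inf: "infinite (UNIV :: 'g set)" and R: "bounded_linear R" and right_inverse: "\<And>q. \<pi> (R q) = q"
  shows False
proof -
  obtain B :: "nat set \<Rightarrow> 'g discrete set" where B_inf: "\<And>S. infinite (B S)"
    and disj: "\<And>S S'. S \<noteq> S' \<Longrightarrow> finite (B S \<inter> B S')" and "countable (\<Union>S. B S)"
    using exists_almost_disjoint_family[OF infinite_UNIV_discrete[OF inf]] by blast
  define a where "a S = apply_bcontfun (R (\<pi> (indicator_linf (B S))))" for S
  let ?support = "\<Union>y\<in>(\<Union>S. B S). \<Union>m. {S. 1 / Suc m \<le> \<bar>a S y\<bar>}"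
  have "finite {S. 1 / Suc m \<le> \<bar>a S y\<bar>}" for m y
    unfolding a_def by (rule finite_large_coefficients[where B = B, OF R disj]) simp_all
  then have "countable ?support"
    by (intro countable_UN[OF \<open>countable (\<Union>S. B S)\<close>] countable_UN[OF countableI_type] countable_finite)
  then obtain S where "S \<notin> ?support"
    using uncountable_UNIV_nat_set by (metis UNIV_I countable_subset subsetI)
  have zero: "a S y = 0" if "y \<in> B S" for y
  proof (rule ccontr)
    assume "a S y \<noteq> 0"
    then obtain m where "inverse (real (Suc m)) < \<bar>a S y\<bar>"
      using reals_Archimedean[of "\<bar>a S y\<bar>"] by auto
    then have "S \<in> ?support" using that by (auto simp: inverse_eq_divide intro!: less_imp_le)
    with \<open>S \<notin> ?support\<close> show False by blast
  qed
  define h where "h = R (\<pi> (indicator_linf (B S))) - indicator_linf (B S)"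
  have "\<pi> h = 0" by (simp add: h_def diff right_inverse)
  then have "h \<in> c0" using kernel by blast
  then have "finite {y. 1 \<le> \<bar>apply_bcontfun h y\<bar>}" unfolding c0_def by simp
  moreover have "B S \<subseteq> {y. 1 \<le> \<bar>apply_bcontfun h y\<bar>}"
    using zero by (auto simp: h_def a_def apply_indicator_linf)
  ultimately show False using B_inf finite_subset by blast
qed

end

theorem mainTheorem2:
  fixes \<pi> :: "'g linf \<Rightarrow> 'q::banach"
  assumes "infinite (UNIV :: 'g set)"
    and "bounded_linear \<pi>"
    and "surj \<pi>"
    and "{f. \<pi> f = 0} = c0"
    and "\<forall>q. norm q = (INF f\<in>{f. \<pi> f = q}. norm f)"
  shows "CQLP TYPE('z::banach) \<pi> \<and> \<not> QLP TYPE('q) \<pi>"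
proof -
  interpret c0_quotient \<pi>
    using assms(2-5) by (simp add: c0_quotient_def c0_quotient_axioms_def)
  have "CQLP TYPE('z) \<pi>"
    unfolding CQLP_def using exists_compact_lifting[OF assms(1)] by blast
  moreover have "\<not> QLP TYPE('q) \<pi>"
  proof
    assume "QLP TYPE('q) \<pi>"
    then obtain R :: "'q \<Rightarrow> 'g linf" where R: "bounded_linear R" "\<pi> \<circ> R = (\<lambda>q. q)"
      unfolding QLP_def using bounded_linear_ident by blast
    have "\<pi> (R q) = q" for q using fun_cong[OF R(2), of q] by simp
    with R(1) show False by (rule no_bounded_right_inverse[OF assms(1)])
  qed
  ultimately show ?thesis ..
qed

end
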